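(* For every distribution $q$ over $[n]$ and every $x\in(0,1)$, \[ \max_{S\subseteq[n]:\ q(S)\ge x} R(q,S)\ \ge\ \frac{\|q_{-x}\|_{1/2}}{(\log_2(n/x)+1)^2}-4 . \]
   Context: For nonempty $S\subseteq[n]$, $q(S)=\sum_{i\in S}q_i$, $M(q,S)=\max_{i\in S}q_i$ and $R(q,S)=\big\lfloor \frac{q(S)}{2M(q,S)}\big\rfloor$. For $x\ge0$, $q_{-x}$ is the vector obtained from $q$ by iteratively removing its smallest entries, stopping just before the total of the removed entries would exceed $x$. For a nonnegative vector $v$ and $r\in(0,1)$, $\|v\|_r=(\sum_i v_i^r)^{1/r}$. *)

theory Defs
  imports Complex_Main
begin

text \<open>Vectors q over [n] = {1..n} are functions nat => real (only values on {1..n} matter).\<close>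

definition qsum :: "(nat \<Rightarrow> real) \<Rightarrow> nat set \<Rightarrow> real" where
  "qsum q S = (\<Sum>i\<in>S. q i)"

definition qmax :: "(nat \<Rightarrow> real) \<Rightarrow> nat set \<Rightarrow> real" where
  "qmax q S = Max (q ` S)"

definition Rq :: "(nat \<Rightarrow> real) \<Rightarrow> nat set \<Rightarrow> int" where
  "Rq q S = \<lfloor>qsum q S / (2 * qmax q S)\<rfloor>"

text \<open>Iterative removal of smallest entries from an ascending sorted list:
  acc is the total removed so far; stop just before the total would exceed x.\<close>
fun remove_small :: "real list \<Rightarrow> real \<Rightarrow> real \<Rightarrow> real list" where
  "remove_small [] acc x = []"
| "remove_small (y # ys) acc x =
     (if acc + y \<le> x then remove_small ys (acc + y) x else y # ys)"

text \<open>q_{-x}, as the list of remaining entries (ties do not affect the multiset of values).\<close>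
definition q_minus :: "nat \<Rightarrow> (nat \<Rightarrow> real) \<Rightarrow> real \<Rightarrow> real list" where
  "q_minus n q x = remove_small (sort (map q [1..<n+1])) 0 x"

definition rnorm :: "real \<Rightarrow> real list \<Rightarrow> real" where
  "rnorm r v = (\<Sum>a\<leftarrow>v. a powr r) powr (1 / r)"

definition is_distribution :: "nat \<Rightarrow> (nat \<Rightarrow> real) \<Rightarrow> bool" where
  "is_distribution n q \<longleftrightarrow> (\<forall>i\<in>{1..n}. q i \<ge> 0) \<and> (\<Sum>i=1..n. q i) = 1"

end

theory Submission
  imports Defs "HOL-Analysis.Convex" "HOL-Library.Multiset" "HOL-Library.Sublist"
begin

text \<open>Sort the entries of \<open>q\<close> increasingly; \<open>v = q\<^sub>-\<^sub>x\<close> is the tail left after the removal.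
  For every entry \<open>a\<close> of \<open>v\<close>, the entries \<open>\<le> a\<close> include the removed ones and the first remaining
  one, so they carry mass \<open>> x\<close>. Hence all entries of \<open>v\<close> exceed \<open>x/n\<close> and fall into
  \<open>L = \<lfloor>log\<^sub>2(n/x)\<rfloor> + 1\<close> dyadic classes \<open>(2\<^sup>-\<^sup>k\<^sup>-\<^sup>1, 2\<^sup>-\<^sup>k]\<close>. If class \<open>k\<close> has \<open>m\<^sub>k\<close> members,
  the set \<open>S\<close> of all entries \<open>\<le> 2\<^sup>-\<^sup>k\<close> has \<open>q(S) > x\<close>, \<open>q(S) \<ge> m\<^sub>k 2\<^sup>-\<^sup>k\<^sup>-\<^sup>1\<close> and
  \<open>M(q,S) \<le> 2\<^sup>-\<^sup>k\<close>, so \<open>R(q,S) > m\<^sub>k/4 - 1\<close>: every class has at most \<open>4(R+1)\<close> members, where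
  \<open>R\<close> is the maximum on the left. Cauchy-Schwarz across and within the classes gives
  \<open>\<parallel>v\<parallel>\<^sub>1\<^sub>/\<^sub>2 \<le> L \<Sum>\<^sub>k m\<^sub>k q(class k) \<le> 4L(R+1)\<close>, hence \<open>\<parallel>v\<parallel>\<^sub>1\<^sub>/\<^sub>2 / L\<^sup>2 \<le> R + 1\<close> once \<open>L \<ge> 4\<close>;
  for \<open>L < 4\<close> the trivial bound \<open>\<parallel>v\<parallel>\<^sub>1\<^sub>/\<^sub>2 \<le> n < 2\<^sup>L \<le> 4L\<^sup>2\<close> suffices.\<close>

lemma remove_small_eq_drop:
  assumes "acc \<le> x"
  shows "\<exists>j. remove_small ys acc x = drop j ys \<and> acc + sum_list (take j ys) \<le> x
     \<and> (j < length ys \<longrightarrow> x < acc + sum_list (take (Suc j) ys))"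
  using assms
proof (induction ys arbitrary: acc)
  case Nil
  then show ?case by (intro exI[of _ 0]) simp
next
  case (Cons y ys)
  show ?case
  proof (cases "acc + y \<le> x")
    case True
    from Cons.IH[OF True] obtain j where "remove_small ys (acc + y) x = drop j ys"
      "acc + y + sum_list (take j ys) \<le> x"
      "j < length ys \<longrightarrow> x < acc + y + sum_list (take (Suc j) ys)" by blast
    with True show ?thesis by (intro exI[of _ "Suc j"]) (auto simp: add.assoc)
  next
    case False
    with Cons.prems show ?thesis by (intro exI[of _ 0]) auto
  qed
qed

lemma sum_list_subseq_le:
  fixes xs ys :: "'a::ordered_comm_monoid_add list"
  assumes "subseq xs ys" and "\<forall>y\<in>set ys. 0 \<le> y"
  shows "sum_list xs \<le> sum_list ys"
  using assms
proof induct
  case list_emb_Nil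
  then show ?case by (simp add: sum_list_nonneg)
next
  case list_emb_Cons
  then show ?case by (simp add: add_increasing)
next
  case list_emb_Cons2
  then show ?case by (simp add: add_mono)
qed

lemma sum_list_squared_le_length_mult:
  fixes f :: "'a \<Rightarrow> real"
  shows "(\<Sum>a\<leftarrow>xs. f a)\<^sup>2 \<le> real (length xs) * (\<Sum>a\<leftarrow>xs. (f a)\<^sup>2)"
  using sum_squared_le_sum_of_squares[of "\<lambda>i. f (xs!i)" "{0..<length xs}"]
  by (simp add: sum_list_sum_nth mult.commute)

lemma sum_list_sqrt_squared_le:
  assumes "\<forall>a\<in>set xs. 0 \<le> a"
  shows "(\<Sum>a\<leftarrow>xs. sqrt a)\<^sup>2 \<le> real (length xs) * sum_list xs"
proof -
  have "map (\<lambda>a. (sqrt a)\<^sup>2) xs = xs"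
    using assms by (induction xs) auto
  then show ?thesis
    using sum_list_squared_le_length_mult[of sqrt xs] by simp
qed

lemma length_mult_le_sum_list:
  fixes xs :: "real list"
  assumes "\<forall>a\<in>set xs. c \<le> a"
  shows "real (length xs) * c \<le> sum_list xs"
  using assms by (induction xs) (auto simp: algebra_simps)

lemma sum_list_eq_sum_classes:
  fixes g :: "'a \<Rightarrow> real" and cls :: "'a \<Rightarrow> nat"
  assumes "\<forall>a\<in>set xs. cls a < L"
  shows "(\<Sum>a\<leftarrow>xs. g a) = (\<Sum>k<L. \<Sum>a\<leftarrow>filter (\<lambda>a. cls a = k) xs. g a)"
  using assms
proof (induction xs)
  case Nil
  then show ?case by simp
next
  case (Cons b xs)
  have "(\<Sum>k<L. \<Sum>a\<leftarrow>filter (\<lambda>a. cls a = k) (b # xs). g a)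
      = (\<Sum>k<L. (if cls b = k then g b else 0) + (\<Sum>a\<leftarrow>filter (\<lambda>a. cls a = k) xs. g a))"
    by (intro sum.cong) auto
  also have "\<dots> = (\<Sum>k<L. if cls b = k then g b else 0) + (\<Sum>k<L. \<Sum>a\<leftarrow>filter (\<lambda>a. cls a = k) xs. g a)"
    by (rule sum.distrib)
  also have "(\<Sum>k<L. if cls b = k then g b else 0) = g b"
    using Cons.prems by (simp add: sum.delta')
  finally show ?case using Cons by simp
qed

lemma sum_sqrt_squared_le_classes:
  fixes cls :: "real \<Rightarrow> nat"
  assumes nonneg: "\<forall>a\<in>set xs. 0 \<le> a"
    and classes: "\<forall>a\<in>set xs. cls a < L"
    and class_size: "\<And>k. real (length (filter (\<lambda>a. cls a = k) xs)) \<le> M"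
  shows "(\<Sum>a\<leftarrow>xs. sqrt a)\<^sup>2 \<le> real L * M * sum_list xs"
proof -
  define C where "C k = filter (\<lambda>a. cls a = k) xs" for k
  have C_nonneg: "\<forall>a\<in>set (C k). 0 \<le> a" for k
    using nonneg by (simp add: C_def)
  have "(\<Sum>a\<leftarrow>xs. sqrt a)\<^sup>2 = (\<Sum>k<L. \<Sum>a\<leftarrow>C k. sqrt a)\<^sup>2"
    unfolding C_def by (subst sum_list_eq_sum_classes[OF classes]) (rule refl)
  also have "\<dots> \<le> (\<Sum>k<L. (\<Sum>a\<leftarrow>C k. sqrt a)\<^sup>2) * real L"
    using sum_squared_le_sum_of_squares[of _ "{..<L}"] by simp
  also have "\<dots> \<le> (\<Sum>k<L. M * sum_list (C k)) * real L"
  proof (intro mult_right_mono sum_mono)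
    fix k
    have "(\<Sum>a\<leftarrow>C k. sqrt a)\<^sup>2 \<le> real (length (C k)) * sum_list (C k)"
      using C_nonneg by (rule sum_list_sqrt_squared_le)
    also have "\<dots> \<le> M * sum_list (C k)"
      using class_size C_nonneg by (intro mult_right_mono sum_list_nonneg) (auto simp: C_def)
    finally show "(\<Sum>a\<leftarrow>C k. sqrt a)\<^sup>2 \<le> M * sum_list (C k)" .
  qed simp
  also have "(\<Sum>k<L. M * sum_list (C k)) = M * sum_list xs"
    using sum_list_eq_sum_classes[OF classes, of "\<lambda>a. a"]
    by (simp add: C_def sum_distrib_left)
  finally show ?thesis by (simp add: algebra_simps)
qed

lemma rnorm_half:
  assumes "\<forall>a\<in>set xs. 0 \<le> a"
  shows "rnorm (1/2) xs = (\<Sum>a\<leftarrow>xs. sqrt a)\<^sup>2"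
proof -
  have "(\<Sum>a\<leftarrow>xs. a powr (1/2)) = (\<Sum>a\<leftarrow>xs. sqrt a)"
    using assms by (intro arg_cong[where f = sum_list] map_cong) (auto simp: powr_half_sqrt)
  moreover have "0 \<le> (\<Sum>a\<leftarrow>xs. sqrt a)"
    using assms by (intro sum_list_nonneg) auto
  ultimately show ?thesis by (simp add: rnorm_def)
qed

definition dyadic_level :: "real \<Rightarrow> nat" where
  "dyadic_level a = nat \<lfloor>log 2 (1 / a)\<rfloor>"

lemma dyadic_level_bounds:
  assumes "0 < a" and "a \<le> 1"
  shows "(1/2) ^ Suc (dyadic_level a) < a" and "a \<le> (1/2) ^ dyadic_level a"
proof -
  define k where "k = dyadic_level a"
  have "\<lfloor>log 2 (1 / a)\<rfloor> = int k"
    using assms by (simp add: k_def dyadic_level_def)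
  then have "2 powr real k \<le> 1 / a" and "1 / a < 2 powr (real k + 1)"
    using assms floor_log_eq_powr_iff[of "1 / a" 2 "int k"] by simp_all
  moreover have "2 powr real k = 2 ^ k" and "2 powr (real k + 1) = 2 ^ Suc k"
    by (simp_all add: powr_add powr_realpow)
  ultimately have "2 ^ k * a \<le> 1" and "1 < 2 ^ Suc k * a"
    using assms(1) by (simp_all add: le_divide_eq divide_less_eq mult.commute)
  then show "(1/2) ^ Suc (dyadic_level a) < a" and "a \<le> (1/2) ^ dyadic_level a"
    by (simp_all add: k_def[symmetric] power_one_over divide_less_eq le_divide_eq mult.commute)
qed

lemma dyadic_level_less:
  assumes "0 < a" and "1 / a \<le> 2 powr y"
  shows "dyadic_level a < nat \<lfloor>y\<rfloor> + 1"
proof -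
  have "log 2 (1 / a) \<le> y"
    using assms by (simp add: le_powr_iff)
  then have "\<lfloor>log 2 (1 / a)\<rfloor> \<le> \<lfloor>y\<rfloor>"
    by (rule floor_mono)
  then show ?thesis
    using nat_mono by (simp add: dyadic_level_def le_imp_less_Suc)
qed

lemma Rq_lower_bound:
  assumes "0 < qsum q S" and "qmax q S \<le> c"
  shows "qsum q S / (2 * c) - 1 < Rq q S"
proof -
  have "finite S"
    using assms(1) by (cases "finite S") (auto simp: qsum_def)
  have "\<not> (\<forall>i\<in>S. q i \<le> 0)"
    using assms(1) sum_nonpos[of S q] by (auto simp: qsum_def)
  then obtain i where "i \<in> S" and "0 < q i"
    by (auto simp: not_le)
  moreover have "q i \<le> qmax q S"
    using \<open>finite S\<close> \<open>i \<in> S\<close> by (simp add: qmax_def)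
  ultimately have "qsum q S / (2 * c) \<le> qsum q S / (2 * qmax q S)"
    using assms by (intro divide_left_mono) auto
  moreover have "qsum q S / (2 * qmax q S) - 1 < Rq q S"
    unfolding Rq_def by (rule real_of_int_floor_gt_diff_one)
  ultimately show ?thesis by linarith
qed

lemma div_square_minus_4_le:
  fixes W R :: real
  assumes "0 \<le> W" and "W \<le> 4 * real L * (R + 1)" and "W < 2 ^ L"
    and "0 < L" and "0 \<le> R"
  shows "W / (real L)\<^sup>2 - 4 \<le> R"
proof (cases "L \<ge> 4")
  case True
  have "W / (real L)\<^sup>2 \<le> W / (4 * real L)"
    using True assms(1) by (intro divide_left_mono) (auto simp: power2_eq_square)
  also have "\<dots> \<le> R + 1"
    using assms(2,4) by (simp add: divide_le_eq mult.commute mult.left_commute)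
  finally show ?thesis by linarith
next
  case False
  with assms(4) consider "L = 1" | "L = 2" | "L = 3"
    by linarith
  then have "(2::real) ^ L \<le> 4 * (real L)\<^sup>2"
    by cases simp_all
  then have "W / (real L)\<^sup>2 \<le> 4"
    using assms(3,4) by (simp add: divide_le_eq)
  then show ?thesis using assms(5) by linarith
qed

locale cut_of_distribution =
  fixes n :: nat and q :: "nat \<Rightarrow> real" and x :: real
  assumes distribution: "is_distribution n q" and x_pos: "0 < x" and x_less_1: "x < 1"
begin

lemma q_nonneg: "i \<in> {1..n} \<Longrightarrow> 0 \<le> q i"
  using distribution by (simp add: is_distribution_def)

lemma qsum_all: "qsum q {1..n} = 1"
  using distribution by (simp add: is_distribution_def qsum_def)

lemma n_pos: "1 \<le> n"
  using qsum_all by (cases n) (auto simp: qsum_def)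

definition Rmax :: real where
  "Rmax = real_of_int (Max {Rq q S | S. S \<subseteq> {1..n} \<and> S \<noteq> {} \<and> qsum q S \<ge> x})"

lemma Rq_le_Rmax:
  assumes "S \<subseteq> {1..n}" and "x \<le> qsum q S"
  shows "real_of_int (Rq q S) \<le> Rmax"
proof -
  have "S \<noteq> {}" using assms(2) x_pos by (auto simp: qsum_def)
  have "{Rq q S | S. S \<subseteq> {1..n} \<and> S \<noteq> {} \<and> qsum q S \<ge> x} \<subseteq> Rq q ` Pow {1..n}"
    by auto
  then have "finite {Rq q S | S. S \<subseteq> {1..n} \<and> S \<noteq> {} \<and> qsum q S \<ge> x}"
    by (rule finite_subset) simp
  with assms \<open>S \<noteq> {}\<close> show ?thesis
    unfolding Rmax_def of_int_le_iff by (intro Max_ge) auto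
qed

lemma Rmax_nonneg: "0 \<le> Rmax"
proof -
  have "q 1 \<le> qmax q {1..n}"
    using n_pos by (auto simp: qmax_def)
  then have "0 \<le> qsum q {1..n} / (2 * qmax q {1..n})"
    using q_nonneg[of 1] n_pos qsum_all by simp
  then have "0 \<le> Rq q {1..n}"
    by (simp add: Rq_def)
  then show ?thesis
    using Rq_le_Rmax[of "{1..n}"] qsum_all x_less_1 by simp
qed

definition sorted_entries :: "real list" where
  "sorted_entries = sort (map q [1..<n+1])"

lemma length_sorted_entries: "length sorted_entries = n"
  by (simp add: sorted_entries_def)

lemma sorted_entries_nonneg: "\<forall>a\<in>set sorted_entries. 0 \<le> a"
  using q_nonneg by (auto simp: sorted_entries_def)

lemma sum_list_filter_sorted_entries: "sum_list (filter P sorted_entries) = qsum q {i\<in>{1..n}. P (q i)}"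
proof -
  have "sum_list (filter P sorted_entries) = sum_list (filter P (map q [1..<n+1]))"
    unfolding sorted_entries_def by (metis mset_filter mset_sort sum_mset_sum_list)
  also have "\<dots> = sum q (set (filter (P \<circ> q) [1..<n+1]))"
    by (simp add: filter_map sum_list_distinct_conv_sum_set)
  also have "set (filter (P \<circ> q) [1..<n+1]) = {i\<in>{1..n}. P (q i)}"
    by auto
  finally show ?thesis by (simp add: qsum_def)
qed

lemma q_minus_eq_drop:
  "\<exists>j. q_minus n q x = drop j sorted_entries \<and> (j < n \<longrightarrow> x < sum_list (take (Suc j) sorted_entries))"
proof -
  have "q_minus n q x = remove_small sorted_entries 0 x"
    by (simp add: q_minus_def sorted_entries_def)
  then show ?thesis
    using remove_small_eq_drop[of 0 x sorted_entries] x_pos length_sorted_entries by auto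
qed

lemma mass_below_q_minus:
  assumes "a \<in> set (q_minus n q x)" and "a \<le> c"
  shows "x < qsum q {i\<in>{1..n}. q i \<le> c}"
proof -
  obtain j where j: "q_minus n q x = drop j sorted_entries"
    and crossing: "j < n \<longrightarrow> x < sum_list (take (Suc j) sorted_entries)"
    using q_minus_eq_drop by blast
  obtain k where "k < length (drop j sorted_entries)" "a = drop j sorted_entries ! k"
    using assms(1) by (auto simp: j in_set_conv_nth)
  then have k: "j + k < length sorted_entries" "a = sorted_entries ! (j + k)"
    by auto
  have "\<forall>b\<in>set (take (Suc j) sorted_entries). b \<le> c"
  proof
    fix b assume "b \<in> set (take (Suc j) sorted_entries)"
    then obtain i where "i < Suc j" "b = sorted_entries ! i"
      by (auto simp: in_set_conv_nth)
    then have "b \<le> a"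
      using k sorted_nth_mono[of sorted_entries i "j + k"] by (simp add: sorted_entries_def less_Suc_eq_le)
    with assms(2) show "b \<le> c" by simp
  qed
  then have "take (Suc j) sorted_entries = filter (\<lambda>b. b \<le> c) (take (Suc j) sorted_entries)"
    by simp
  also have "subseq \<dots> (filter (\<lambda>b. b \<le> c) sorted_entries)"
    by (intro subseq_filter prefix_imp_subseq take_is_prefix)
  finally have "sum_list (take (Suc j) sorted_entries) \<le> sum_list (filter (\<lambda>b. b \<le> c) sorted_entries)"
    using sorted_entries_nonneg by (intro sum_list_subseq_le) auto
  moreover have "j < n"
    using k(1) length_sorted_entries by simp
  ultimately show ?thesis
    using crossing by (simp add: sum_list_filter_sorted_entries)
qed

lemma q_minus_nonneg: "\<forall>a\<in>set (q_minus n q x). 0 \<le> a"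
proof -
  obtain j where "q_minus n q x = drop j sorted_entries"
    using q_minus_eq_drop by blast
  then show ?thesis using sorted_entries_nonneg by (auto dest: in_set_dropD)
qed

lemma q_minus_gt:
  assumes "a \<in> set (q_minus n q x)"
  shows "x / real n < a"
proof -
  let ?T = "{i\<in>{1..n}. q i \<le> a}"
  have "x < qsum q ?T"
    using mass_below_q_minus[OF assms] by simp
  also have "\<dots> \<le> real (card ?T) * a"
    using sum_bounded_above[of ?T q a] by (simp add: qsum_def)
  also have "\<dots> \<le> real n * a"
  proof -
    have "card ?T \<le> card {1..n}"
      by (rule card_mono) auto
    then show ?thesis
      using q_minus_nonneg assms by (intro mult_right_mono) auto
  qed
  finally show ?thesis
    using n_pos by (simp add: divide_less_eq mult.commute)
qed

lemma sum_filter_q_minus_le: "sum_list (filter P (q_minus n q x)) \<le> qsum q {i\<in>{1..n}. P (q i)}"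
proof -
  obtain j where j: "q_minus n q x = drop j sorted_entries"
    using q_minus_eq_drop by blast
  have "subseq (filter P (drop j sorted_entries)) (filter P sorted_entries)"
    by (intro subseq_filter suffix_imp_subseq suffix_drop)
  then show ?thesis
    unfolding j sum_list_filter_sorted_entries[symmetric] using sorted_entries_nonneg
    by (intro sum_list_subseq_le) auto
qed

lemma sum_q_minus_le_1: "sum_list (q_minus n q x) \<le> 1"
  using sum_filter_q_minus_le[of "\<lambda>_. True"] qsum_all by (simp del: atLeastAtMost_iff)

lemma length_q_minus_le: "length (q_minus n q x) \<le> n"
proof -
  obtain j where "q_minus n q x = drop j sorted_entries"
    using q_minus_eq_drop by blast
  then show ?thesis by (simp add: length_sorted_entries)
qed

definition levels :: nat where
  "levels = nat \<lfloor>log 2 (real n / x)\<rfloor> + 1"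

lemma n_div_x_gt_1: "1 < real n / x"
  using n_pos x_pos x_less_1 by (simp add: field_simps)

lemma levels_le: "real levels \<le> log 2 (real n / x) + 1"
  using n_div_x_gt_1 by (simp add: levels_def)

lemma levels_pos: "0 < levels"
  by (simp add: levels_def)

lemma n_less_2_pow_levels: "real n < 2 ^ levels"
proof -
  have "log 2 (real n / x) < real levels"
    by (simp add: levels_def) linarith
  then have "real n / x < 2 powr real levels"
    using n_div_x_gt_1 by (simp add: log_less_iff)
  then have "real n < 2 ^ levels * x"
    using x_pos by (simp add: divide_less_eq powr_realpow)
  also have "\<dots> < 2 ^ levels"
    using x_less_1 by simp
  finally show ?thesis .
qed

lemma dyadic_level_q_minus_less:
  assumes "a \<in> set (q_minus n q x)"
  shows "dyadic_level a < levels"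
proof -
  have "0 < x / real n" using x_pos n_pos by simp
  then have "0 < a" using q_minus_gt[OF assms] by linarith
  moreover have "1 / a \<le> 2 powr log 2 (real n / x)"
    using q_minus_gt[OF assms] \<open>0 < a\<close> n_div_x_gt_1 x_pos n_pos by (simp add: field_simps)
  ultimately show ?thesis
    unfolding levels_def by (rule dyadic_level_less)
qed

lemma q_minus_le_1: "a \<in> set (q_minus n q x) \<Longrightarrow> a \<le> 1"
  using member_le_sum_list[of a "q_minus n q x"] q_minus_nonneg sum_q_minus_le_1 by auto

lemma ratio_below_lt_Rmax:
  assumes "x < qsum q {i\<in>{1..n}. q i \<le> c}"
  shows "qsum q {i\<in>{1..n}. q i \<le> c} / (2 * c) < Rmax + 1"
proof -
  let ?T = "{i\<in>{1..n}. q i \<le> c}"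
  have "?T \<noteq> {}"
  proof
    assume "?T = {}"
    then have "qsum q ?T = 0"
      unfolding qsum_def by (simp only: sum.empty)
    with assms x_pos show False by simp
  qed
  then have "qmax q ?T \<le> c"
    unfolding qmax_def by (subst Max_le_iff) auto
  then have "qsum q ?T / (2 * c) - 1 < Rq q ?T"
    using assms x_pos by (intro Rq_lower_bound) auto
  moreover have "Rq q ?T \<le> Rmax"
    using assms by (intro Rq_le_Rmax) auto
  ultimately show ?thesis by linarith
qed

lemma dyadic_class_size_le:
  "real (length (filter (\<lambda>a. dyadic_level a = k) (q_minus n q x))) \<le> 4 * (Rmax + 1)"
proof (cases "filter (\<lambda>a. dyadic_level a = k) (q_minus n q x) = []")
  case True
  then show ?thesis using Rmax_nonneg by simp
next
  case False
  define C where "C = filter (\<lambda>a. dyadic_level a = k) (q_minus n q x)"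
  define c :: real where "c = (1/2) ^ k"
  have C_range: "0 < a \<and> a \<le> 1 \<and> dyadic_level a = k" if "a \<in> set C" for a
    using that q_minus_gt[of a] q_minus_le_1[of a] x_pos n_pos
    by (auto simp: C_def intro: le_less_trans[rotated] divide_nonneg_nonneg)
  then have C_le_c: "a \<le> c" if "a \<in> set C" for a
    using that dyadic_level_bounds(2)[of a] by (auto simp: c_def)
  obtain a where "a \<in> set C"
    using False by (force simp: C_def filter_empty_conv)
  then have x_less: "x < qsum q {i\<in>{1..n}. q i \<le> c}"
    using mass_below_q_minus[of a c] C_le_c by (auto simp: C_def)
  have "C = filter (\<lambda>a. dyadic_level a = k) (filter (\<lambda>b. b \<le> c) (q_minus n q x))"
    using C_le_c unfolding filter_filter by (auto simp: C_def intro!: filter_cong)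
  then have "sum_list C \<le> sum_list (filter (\<lambda>b. b \<le> c) (q_minus n q x))"
    using sum_list_subseq_le[OF subseq_filter_left[where xs = "filter (\<lambda>b. b \<le> c) (q_minus n q x)"]]
      q_minus_nonneg by simp
  also have "\<dots> \<le> qsum q {i\<in>{1..n}. q i \<le> c}"
    by (rule sum_filter_q_minus_le)
  finally have C_mass: "sum_list C \<le> qsum q {i\<in>{1..n}. q i \<le> c}" .
  have "real (length C) * (1/2) ^ Suc k \<le> sum_list C"
    using C_range dyadic_level_bounds(1) by (intro length_mult_le_sum_list) (auto intro: less_imp_le)
  then have "real (length C) / 4 \<le> sum_list C / (2 * c)"
    by (simp add: c_def field_simps)
  also have "\<dots> \<le> qsum q {i\<in>{1..n}. q i \<le> c} / (2 * c)"
    using C_mass by (simp add: c_def divide_right_mono)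
  also have "\<dots> < Rmax + 1"
    using x_less by (rule ratio_below_lt_Rmax)
  finally show ?thesis
    by (simp add: C_def)
qed

lemma sum_sqrt_q_minus_squared_le_levels:
  "(\<Sum>a\<leftarrow>q_minus n q x. sqrt a)\<^sup>2 \<le> 4 * real levels * (Rmax + 1)"
proof -
  have "(\<Sum>a\<leftarrow>q_minus n q x. sqrt a)\<^sup>2
      \<le> real levels * (4 * (Rmax + 1)) * sum_list (q_minus n q x)"
    using q_minus_nonneg dyadic_level_q_minus_less dyadic_class_size_le
    by (intro sum_sqrt_squared_le_classes) auto
  also have "\<dots> \<le> real levels * (4 * (Rmax + 1))"
    using sum_q_minus_le_1 Rmax_nonneg
      mult_left_mono[of "sum_list (q_minus n q x)" 1 "real levels * (4 * (Rmax + 1))"]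
    by simp
  finally show ?thesis
    by (simp add: algebra_simps)
qed

lemma sum_sqrt_q_minus_squared_le_n: "(\<Sum>a\<leftarrow>q_minus n q x. sqrt a)\<^sup>2 \<le> real n"
proof -
  have "(\<Sum>a\<leftarrow>q_minus n q x. sqrt a)\<^sup>2
      \<le> real (length (q_minus n q x)) * sum_list (q_minus n q x)"
    using q_minus_nonneg by (rule sum_list_sqrt_squared_le)
  also have "\<dots> \<le> real n * 1"
    using length_q_minus_le sum_q_minus_le_1 q_minus_nonneg
    by (intro mult_mono) (auto intro: sum_list_nonneg)
  finally show ?thesis by simp
qed

end

theorem lemmaC4:
  fixes n :: nat and q :: "nat \<Rightarrow> real" and x :: real
  assumes "is_distribution n q" and "0 < x" and "x < 1"
  shows "real_of_int (Max {Rq q S | S. S \<subseteq> {1..n} \<and> S \<noteq> {} \<and> qsum q S \<ge> x})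
           \<ge> rnorm (1/2) (q_minus n q x) / (log 2 (real n / x) + 1)\<^sup>2 - 4"
proof -
  interpret cut_of_distribution n q x
    using assms by unfold_locales
  define W where "W = (\<Sum>a\<leftarrow>q_minus n q x. sqrt a)\<^sup>2"
  have "W / (real levels)\<^sup>2 - 4 \<le> Rmax"
  proof (rule div_square_minus_4_le)
    show "W \<le> 4 * real levels * (Rmax + 1)"
      unfolding W_def by (rule sum_sqrt_q_minus_squared_le_levels)
    show "W < 2 ^ levels"
      unfolding W_def using sum_sqrt_q_minus_squared_le_n n_less_2_pow_levels by linarith
  qed (simp_all add: W_def levels_pos Rmax_nonneg)
  moreover have "W / (log 2 (real n / x) + 1)\<^sup>2 \<le> W / (real levels)\<^sup>2"
    using levels_le levels_pos by (intro divide_left_mono power_mono) (auto simp: W_def)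
  ultimately show ?thesis
    using q_minus_nonneg by (simp add: rnorm_half W_def Rmax_def)
qed

end
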